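(* Assume the narrow class number of $F$ is $1$, and let $\delta$ be a generator of the different $\mathfrak{d}$. Let $q\in\mathcal{O}$ be nonzero, $m,\ell$ positive integers, $\nu,\mu\in\mathfrak{d}^{-1}$, and let $p$ be a prime element dividing $q$ such that $p\nmid\delta\nu$ and $p\nmid\delta\mu$ in $\mathcal{O}$. Then $$S(\nu p^m,\mu p^\ell;q)=S(\nu,\mu p^{m+\ell};q)+N((p))\,S\left(\nu p^{m-1},\mu p^{\ell-1};\frac{q}{p}\right).$$
   Context: $F$ is a totally real number field with ring of integers $\mathcal{O}$ and different $\mathfrak{d}$ (principal when the narrow class number is $1$). A prime element is a generator of a nonzero prime ideal. $e(\nu)=\exp(2\pi i\,\mathrm{Tr}_{F/\mathbb{Q}}(\nu))$. For $\nu,\mu\in\mathfrak{d}^{-1}$ and nonzero $q\in\mathcal{O}$, $S(\nu,\mu;q)=\sum_{x\in(\mathcal{O}/q\mathcal{O})^\times}e\left(\frac{\nu x+\mu x^{-1}}{q}\right)$, where $xx^{-1}\equiv1\bmod q$. *)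

theory Defs
  imports Complex_Main "HOL-Computational_Algebra.Polynomial"
begin

text \<open>A number field is modelled as a subfield K of the complex numbers that is
finite-dimensional over the rationals.\<close>

definition nf_subfield :: "complex set \<Rightarrow> bool" where
  "nf_subfield K \<longleftrightarrow> 0 \<in> K \<and> 1 \<in> K \<and>
     (\<forall>a\<in>K. \<forall>b\<in>K. a + b \<in> K \<and> a - b \<in> K \<and> a * b \<in> K) \<and>
     (\<forall>a\<in>K. a \<noteq> 0 \<longrightarrow> inverse a \<in> K)"

definition number_field :: "complex set \<Rightarrow> bool" where
  "number_field K \<longleftrightarrow> nf_subfield K \<and>
     (\<exists>B. finite B \<and> B \<subseteq> K \<and>
        (\<forall>x\<in>K. \<exists>r :: complex \<Rightarrow> rat. x = (\<Sum>b\<in>B. of_rat (r b) * b)))"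

text \<open>Field embeddings of K into the complex numbers (normalised to 0 outside K).\<close>
definition nf_embeddings :: "complex set \<Rightarrow> (complex \<Rightarrow> complex) set" where
  "nf_embeddings K = {\<sigma>. \<sigma> 1 = 1 \<and>
     (\<forall>a\<in>K. \<forall>b\<in>K. \<sigma> (a + b) = \<sigma> a + \<sigma> b \<and> \<sigma> (a * b) = \<sigma> a * \<sigma> b) \<and>
     (\<forall>x. x \<notin> K \<longrightarrow> \<sigma> x = 0)}"

definition totally_real :: "complex set \<Rightarrow> bool" where
  "totally_real K \<longleftrightarrow> (\<forall>\<sigma>\<in>nf_embeddings K. \<forall>x\<in>K. \<sigma> x \<in> \<real>)"

definition nf_trace :: "complex set \<Rightarrow> complex \<Rightarrow> complex" where
  "nf_trace K x = (\<Sum>\<sigma>\<in>nf_embeddings K. \<sigma> x)"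

definition algebraic_integer :: "complex \<Rightarrow> bool" where
  "algebraic_integer x \<longleftrightarrow>
     (\<exists>P :: int poly. lead_coeff P = 1 \<and> poly (map_poly of_int P) x = 0)"

definition nf_O :: "complex set \<Rightarrow> complex set" where
  "nf_O K = {x \<in> K. algebraic_integer x}"

definition nf_codiff :: "complex set \<Rightarrow> complex set" where
  "nf_codiff K = {x \<in> K. \<forall>y\<in>nf_O K. nf_trace K (x * y) \<in> \<int>}"

text \<open>delta generates the different d, i.e. d = delta O, equivalently d^{-1} = delta^{-1} O.\<close>
definition generates_different :: "complex set \<Rightarrow> complex \<Rightarrow> bool" where
  "generates_different K \<delta> \<longleftrightarrow> \<delta> \<in> nf_O K \<and> \<delta> \<noteq> 0 \<and>
     nf_codiff K = {x / \<delta> | x. x \<in> nf_O K}"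

definition nf_ideal :: "complex set \<Rightarrow> complex set \<Rightarrow> bool" where
  "nf_ideal K I \<longleftrightarrow> I \<subseteq> nf_O K \<and> 0 \<in> I \<and>
     (\<forall>a\<in>I. \<forall>b\<in>I. a + b \<in> I) \<and> (\<forall>a\<in>I. \<forall>r\<in>nf_O K. r * a \<in> I)"

definition principal_ideal :: "complex set \<Rightarrow> complex \<Rightarrow> complex set" where
  "principal_ideal K a = {a * x | x. x \<in> nf_O K}"

definition totally_positive :: "complex set \<Rightarrow> complex \<Rightarrow> bool" where
  "totally_positive K a \<longleftrightarrow> a \<in> K \<and>
     (\<forall>\<sigma>\<in>nf_embeddings K. \<sigma> a \<in> \<real> \<and> Re (\<sigma> a) > 0)"

text \<open>Narrow class number 1: every nonzero (integral) ideal is generated by a totally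
positive element (equivalently every fractional ideal lies in P^+).\<close>
definition narrow_class_number_one :: "complex set \<Rightarrow> bool" where
  "narrow_class_number_one K \<longleftrightarrow>
     (\<forall>I. nf_ideal K I \<and> I \<noteq> {0} \<longrightarrow>
        (\<exists>a. totally_positive K a \<and> I = principal_ideal K a))"

definition nf_prime_ideal :: "complex set \<Rightarrow> complex set \<Rightarrow> bool" where
  "nf_prime_ideal K P \<longleftrightarrow> nf_ideal K P \<and> 1 \<notin> P \<and>
     (\<forall>a\<in>nf_O K. \<forall>b\<in>nf_O K. a * b \<in> P \<longrightarrow> a \<in> P \<or> b \<in> P)"

definition nf_prime_elem :: "complex set \<Rightarrow> complex \<Rightarrow> bool" where
  "nf_prime_elem K p \<longleftrightarrow> p \<in> nf_O K \<and> p \<noteq> 0 \<and> nf_prime_ideal K (principal_ideal K p)"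

definition nf_dvd :: "complex set \<Rightarrow> complex \<Rightarrow> complex \<Rightarrow> bool" where
  "nf_dvd K a b \<longleftrightarrow> a \<in> nf_O K \<and> (\<exists>c\<in>nf_O K. b = a * c)"

definition nf_cong :: "complex set \<Rightarrow> complex \<Rightarrow> complex \<Rightarrow> complex \<Rightarrow> bool" where
  "nf_cong K q x y \<longleftrightarrow> (\<exists>c\<in>nf_O K. x - y = q * c)"

definition nf_res :: "complex set \<Rightarrow> complex \<Rightarrow> complex \<Rightarrow> complex set" where
  "nf_res K q x = {y \<in> nf_O K. nf_cong K q y x}"

definition nf_unit_mod :: "complex set \<Rightarrow> complex \<Rightarrow> complex \<Rightarrow> bool" where
  "nf_unit_mod K q x \<longleftrightarrow> x \<in> nf_O K \<and> (\<exists>y\<in>nf_O K. nf_cong K q (x * y) 1)"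

definition nf_residues :: "complex set \<Rightarrow> complex \<Rightarrow> complex set set" where
  "nf_residues K q = {nf_res K q x | x. x \<in> nf_O K}"

definition nf_unit_residues :: "complex set \<Rightarrow> complex \<Rightarrow> complex set set" where
  "nf_unit_residues K q = {nf_res K q x | x. nf_unit_mod K q x}"

definition ideal_norm :: "complex set \<Rightarrow> complex \<Rightarrow> nat" where
  "ideal_norm K p = card (nf_residues K p)"

definition nf_e :: "complex set \<Rightarrow> complex \<Rightarrow> complex" where
  "nf_e K \<nu> = exp (2 * pi * \<i> * nf_trace K \<nu>)"

definition kloosterman :: "complex set \<Rightarrow> complex \<Rightarrow> complex \<Rightarrow> complex \<Rightarrow> complex" where
  "kloosterman K \<nu> \<mu> q =
     (\<Sum>c\<in>nf_unit_residues K q.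
        let x = (SOME x. x \<in> c);
            xi = (SOME y. y \<in> nf_O K \<and> nf_cong K q (x * y) 1)
        in nf_e K ((\<nu> * x + \<mu> * xi) / q))"

end

theory Submission
  imports Defs "HOL-Analysis.Complex_Transcendental"
begin

text \<open>Write \<open>q = p q\<^sub>1\<close>. Reduction modulo \<open>q\<^sub>1\<close> maps \<open>(O/q)\<^sup>\<times>\<close> onto \<open>(O/q\<^sub>1)\<^sup>\<times>\<close>, and the
  fibre over \<open>d\<close> consists of the classes of \<open>d + q\<^sub>1r\<close>, \<open>r \<in> O/p\<close>, that are units modulo \<open>q\<close>:
  all \<open>N(p)\<close> of them if \<open>p | q\<^sub>1\<close>, and all but one otherwise.
  On such a fibre the summand of \<open>S(\<nu>p\<^sup>m, \<mu>p\<^sup>l; q)\<close> is the summand of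
  \<open>S(\<nu>p\<^sup>m\<^sup>-\<^sup>1, \<mu>p\<^sup>l\<^sup>-\<^sup>1; q\<^sub>1)\<close> at \<open>d\<close>, whereas the summand of \<open>S(\<nu>, \<mu>p\<^sup>m\<^sup>+\<^sup>l; q)\<close> is a
  term depending on \<open>d\<close> times the additive character \<open>e(\<nu>r/p)\<close>, whose sum over \<open>O/p\<close>
  vanishes because \<open>p \<nmid> \<delta>\<nu>\<close>. So if \<open>p | q\<^sub>1\<close> the second sum is \<open>0\<close>; otherwise it is minus the
  sum of the excluded terms, and these reassemble into \<open>S(\<nu>p\<^sup>m\<^sup>-\<^sup>1, \<mu>p\<^sup>l\<^sup>-\<^sup>1; q\<^sub>1)\<close> after the
  substitution \<open>d \<mapsto> u\<^sup>md\<close>, where \<open>pu \<equiv> 1 (mod q\<^sub>1)\<close>.\<close>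

lemma algebraic_integer_iff_algebraic_int: "algebraic_integer x \<longleftrightarrow> algebraic_int x"
  unfolding algebraic_integer_def algebraic_int_altdef_ipoly by auto

lemma nf_trace_add:
  "a \<in> K \<Longrightarrow> b \<in> K \<Longrightarrow> nf_trace K (a + b) = nf_trace K a + nf_trace K b"
  unfolding nf_trace_def
  by (subst sum.distrib[symmetric], rule sum.cong) (auto simp: nf_embeddings_def)

lemma nf_e_add: "a \<in> K \<Longrightarrow> b \<in> K \<Longrightarrow> nf_e K (a + b) = nf_e K a * nf_e K b"
  unfolding nf_e_def by (simp add: nf_trace_add distrib_left exp_add)

lemma nf_e_eq_1_iff: "nf_e K w = 1 \<longleftrightarrow> nf_trace K w \<in> \<int>"
proof
  assume "nf_e K w = 1"
  then obtain n :: int where "Re (2 * pi * \<i> * nf_trace K w) = 0"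
    and "Im (2 * pi * \<i> * nf_trace K w) = of_int (2 * n) * pi"
    unfolding nf_e_def exp_eq_1 by blast
  then have "nf_trace K w = of_int n" by (simp add: complex_eq_iff)
  then show "nf_trace K w \<in> \<int>" by simp
next
  assume "nf_trace K w \<in> \<int>"
  then obtain n where "nf_trace K w = of_int n" by (elim Ints_cases)
  then show "nf_e K w = 1" unfolding nf_e_def exp_eq_1 by (intro conjI exI[of _ n]) simp_all
qed

text \<open>Closure of the algebraic integers under sums and products is taken as an assumption
  here; \<open>ring_of_integersI\<close> derives it from a nonzero principal ideal \<open>pO\<close> by cancelling \<open>p\<close>.\<close>

locale ring_of_integers =
  fixes K :: "complex set"
  assumes subfield: "nf_subfield K"
    and integers_add: "a \<in> nf_O K \<Longrightarrow> b \<in> nf_O K \<Longrightarrow> a + b \<in> nf_O K"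
    and integers_mult: "a \<in> nf_O K \<Longrightarrow> b \<in> nf_O K \<Longrightarrow> a * b \<in> nf_O K"

lemma ring_of_integersI:
  assumes "nf_subfield K" and "p \<noteq> 0" and "nf_ideal K (principal_ideal K p)"
  shows "ring_of_integers K"
proof
  have mem: "x \<in> principal_ideal K p \<longleftrightarrow> (\<exists>c\<in>nf_O K. x = p * c)" for x
    unfolding principal_ideal_def by auto
  fix a b assume a: "a \<in> nf_O K" and b: "b \<in> nf_O K"
  have "p * a + p * b \<in> principal_ideal K p"
    using assms(3) a b mem unfolding nf_ideal_def by blast
  then obtain c where "c \<in> nf_O K" "p * (a + b) = p * c"
    using mem by (auto simp: distrib_left)
  then show "a + b \<in> nf_O K" using assms(2) by simp
  have "a * (p * b) \<in> principal_ideal K p"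
    using assms(3) a b mem unfolding nf_ideal_def by blast
  then obtain c where "c \<in> nf_O K" "p * (a * b) = p * c"
    using mem by (auto simp: mult.left_commute)
  then show "a * b \<in> nf_O K" using assms(2) by simp
qed (rule assms(1))

context ring_of_integers
begin

abbreviation "\<O> \<equiv> nf_O K"

lemma K_zero: "0 \<in> K" and K_one: "1 \<in> K"
  and K_add: "a \<in> K \<Longrightarrow> b \<in> K \<Longrightarrow> a + b \<in> K"
  and K_diff: "a \<in> K \<Longrightarrow> b \<in> K \<Longrightarrow> a - b \<in> K"
  and K_mult: "a \<in> K \<Longrightarrow> b \<in> K \<Longrightarrow> a * b \<in> K"
  using subfield unfolding nf_subfield_def by auto

lemma K_divide: "a \<in> K \<Longrightarrow> b \<in> K \<Longrightarrow> a / b \<in> K"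
  using subfield unfolding nf_subfield_def divide_inverse
  by (cases "b = 0") (auto simp: K_mult)

lemma K_of_nat: "of_nat n \<in> K"
  by (induction n) (auto intro: K_add K_zero K_one)

lemma K_of_int: "of_int n \<in> K"
  using K_of_nat[of "nat n"] K_diff[OF K_zero K_of_nat[of "nat (- n)"]]
  by (cases "n \<ge> 0") simp_all

lemma integers_subset_K: "\<O> \<subseteq> K"
  unfolding nf_O_def by auto

lemma integers_of_int: "of_int n \<in> \<O>"
  unfolding nf_O_def by (simp add: K_of_int algebraic_integer_iff_algebraic_int)

lemma integers_zero: "0 \<in> \<O>" and integers_one: "1 \<in> \<O>"
  using integers_of_int[of 0] integers_of_int[of 1] by simp_all

lemma integers_uminus: "a \<in> \<O> \<Longrightarrow> - a \<in> \<O>"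
  using integers_mult[OF integers_of_int[of "-1"]] by simp

lemma integers_diff: "a \<in> \<O> \<Longrightarrow> b \<in> \<O> \<Longrightarrow> a - b \<in> \<O>"
  using integers_add[OF _ integers_uminus, of a b] by simp

lemma integers_power: "a \<in> \<O> \<Longrightarrow> a ^ n \<in> \<O>"
  by (induction n) (auto intro: integers_mult integers_one)

lemma integers_sum: "(\<And>i. i \<in> A \<Longrightarrow> f i \<in> \<O>) \<Longrightarrow> sum f A \<in> \<O>"
  by (induction A rule: infinite_finite_induct) (auto intro: integers_add integers_zero)

section \<open>Congruences and residue classes\<close>

lemma nf_cong_refl: "nf_cong K q x x"
  unfolding nf_cong_def using integers_zero by force

lemma nf_cong_sym: "nf_cong K q x y \<Longrightarrow> nf_cong K q y x"
  unfolding nf_cong_def using integers_uminus by (metis minus_diff_eq mult_minus_right)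

lemma nf_cong_trans: "nf_cong K q x y \<Longrightarrow> nf_cong K q y z \<Longrightarrow> nf_cong K q x z"
  unfolding nf_cong_def
proof (elim bexE)
  fix c d assume "c \<in> \<O>" "d \<in> \<O>" "x - y = q * c" "y - z = q * d"
  then show "\<exists>e\<in>\<O>. x - z = q * e"
    by (intro bexI[of _ "c + d"]) (auto simp: algebra_simps integers_add)
qed

lemma nf_cong_add:
  "nf_cong K q x y \<Longrightarrow> nf_cong K q x' y' \<Longrightarrow> nf_cong K q (x + x') (y + y')"
  unfolding nf_cong_def
proof (elim bexE)
  fix c d assume "c \<in> \<O>" "d \<in> \<O>" "x - y = q * c" "x' - y' = q * d"
  then show "\<exists>e\<in>\<O>. x + x' - (y + y') = q * e"
    by (intro bexI[of _ "c + d"]) (auto simp: algebra_simps integers_add)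
qed

lemma nf_cong_diff:
  "nf_cong K q x y \<Longrightarrow> nf_cong K q x' y' \<Longrightarrow> nf_cong K q (x - x') (y - y')"
  unfolding nf_cong_def
proof (elim bexE)
  fix c d assume "c \<in> \<O>" "d \<in> \<O>" "x - y = q * c" "x' - y' = q * d"
  then show "\<exists>e\<in>\<O>. x - x' - (y - y') = q * e"
    by (intro bexI[of _ "c - d"]) (auto simp: algebra_simps integers_diff)
qed

lemma nf_cong_mult_left: "z \<in> \<O> \<Longrightarrow> nf_cong K q x y \<Longrightarrow> nf_cong K q (z * x) (z * y)"
  unfolding nf_cong_def
proof (elim bexE)
  fix c assume "z \<in> \<O>" "c \<in> \<O>" "x - y = q * c"
  then show "\<exists>e\<in>\<O>. z * x - z * y = q * e"
    by (intro bexI[of _ "z * c"]) (auto simp: algebra_simps integers_mult)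
qed

lemma nf_cong_mult:
  assumes "x \<in> \<O>" "y' \<in> \<O>" "nf_cong K q x y" "nf_cong K q x' y'"
  shows "nf_cong K q (x * x') (y * y')"
proof -
  have "nf_cong K q (x * x') (x * y')" using nf_cong_mult_left assms by blast
  moreover have "nf_cong K q (y' * x) (y' * y)" using nf_cong_mult_left assms by blast
  ultimately show ?thesis by (metis nf_cong_trans mult.commute)
qed

lemma nf_cong_power:
  "x \<in> \<O> \<Longrightarrow> y \<in> \<O> \<Longrightarrow> nf_cong K q x y \<Longrightarrow> nf_cong K q (x ^ n) (y ^ n)"
  by (induction n) (auto intro: nf_cong_refl nf_cong_mult integers_power)

lemma nf_cong_dvd: "a \<in> \<O> \<Longrightarrow> nf_cong K (a * b) x y \<Longrightarrow> nf_cong K b x y"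
  unfolding nf_cong_def
proof (elim bexE)
  fix c assume "a \<in> \<O>" "c \<in> \<O>" "x - y = a * b * c"
  then show "\<exists>e\<in>\<O>. x - y = b * e"
    by (intro bexI[of _ "a * c"]) (auto simp: algebra_simps integers_mult)
qed

lemma nf_cong_add_multiple: "c \<in> \<O> \<Longrightarrow> nf_cong K q (x + q * c) x"
  unfolding nf_cong_def by auto

definition class_rep :: "complex set \<Rightarrow> complex" where
  "class_rep c = (SOME x. x \<in> c)"

lemma nf_res_eq_iff:
  "x \<in> \<O> \<Longrightarrow> y \<in> \<O> \<Longrightarrow> nf_res K q x = nf_res K q y \<longleftrightarrow> nf_cong K q x y"
  unfolding nf_res_def by (auto intro: nf_cong_trans nf_cong_sym nf_cong_refl)

lemma class_rep_nf_res:
  assumes "x \<in> \<O>"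
  shows "class_rep (nf_res K q x) \<in> \<O>" and "nf_cong K q (class_rep (nf_res K q x)) x"
proof -
  have "x \<in> nf_res K q x" unfolding nf_res_def using assms nf_cong_refl by simp
  then have "class_rep (nf_res K q x) \<in> nf_res K q x" unfolding class_rep_def by (rule someI)
  then show "class_rep (nf_res K q x) \<in> \<O>" "nf_cong K q (class_rep (nf_res K q x)) x"
    unfolding nf_res_def by auto
qed

lemma nf_res_class_rep: "x \<in> \<O> \<Longrightarrow> nf_res K q (class_rep (nf_res K q x)) = nf_res K q x"
  using class_rep_nf_res nf_res_eq_iff by blast

lemma class_rep_residue:
  assumes "c \<in> nf_residues K q"
  shows "class_rep c \<in> \<O>" and "nf_res K q (class_rep c) = c"
  using assms class_rep_nf_res nf_res_class_rep unfolding nf_residues_def by auto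

lemma nf_res_in_residues: "x \<in> \<O> \<Longrightarrow> nf_res K q x \<in> nf_residues K q"
  unfolding nf_residues_def by auto

definition inv_mod :: "complex \<Rightarrow> complex \<Rightarrow> complex" where
  "inv_mod q x = (SOME y. y \<in> \<O> \<and> nf_cong K q (x * y) 1)"

lemma inv_mod:
  assumes "nf_unit_mod K q x"
  shows "inv_mod q x \<in> \<O>" and "nf_cong K q (x * inv_mod q x) 1"
proof -
  have "\<exists>y. y \<in> \<O> \<and> nf_cong K q (x * y) 1" using assms unfolding nf_unit_mod_def by auto
  then have "inv_mod q x \<in> \<O> \<and> nf_cong K q (x * inv_mod q x) 1"
    unfolding inv_mod_def by (rule someI_ex)
  then show "inv_mod q x \<in> \<O>" "nf_cong K q (x * inv_mod q x) 1" by auto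
qed

lemma inv_mod_unique:
  assumes "x \<in> \<O>" "x' \<in> \<O>" "y \<in> \<O>" "y' \<in> \<O>" "nf_cong K q x x'"
    and "nf_cong K q (x * y) 1" "nf_cong K q (x' * y') 1"
  shows "nf_cong K q y y'"
proof -
  have "nf_cong K q (y * (x' * y')) y"
    using nf_cong_mult_left[OF assms(3) assms(7)] by simp
  moreover have "nf_cong K q (x' * (y * y')) (x * (y * y'))"
    using nf_cong_mult[OF assms(2) _ nf_cong_sym[OF assms(5)] nf_cong_refl] assms(3,4)
    by (simp add: integers_mult)
  moreover have "nf_cong K q ((x * y) * y') y'"
    using nf_cong_mult[OF _ assms(4) assms(6) nf_cong_refl] assms(1,3) integers_mult by simp
  ultimately show ?thesis
    by (metis (no_types, lifting) nf_cong_sym nf_cong_trans mult.left_commute mult.assoc)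
qed

lemma nf_unit_mod_cong:
  "nf_unit_mod K q x \<Longrightarrow> x' \<in> \<O> \<Longrightarrow> nf_cong K q x' x \<Longrightarrow> nf_unit_mod K q x'"
  unfolding nf_unit_mod_def by (metis nf_cong_mult nf_cong_refl nf_cong_trans)

lemma nf_unit_mod_mult:
  assumes "nf_unit_mod K q x" "nf_unit_mod K q y"
  shows "nf_unit_mod K q (x * y)"
proof -
  obtain x' y' where "x \<in> \<O>" "y \<in> \<O>" "x' \<in> \<O>" "y' \<in> \<O>"
    and "nf_cong K q (x * x') 1" "nf_cong K q (y * y') 1"
    using assms unfolding nf_unit_mod_def by auto
  moreover from this have "nf_cong K q ((x * x') * (y * y')) (1 * 1)"
    by (intro nf_cong_mult) (auto intro: integers_mult integers_one)
  ultimately show ?thesis unfolding nf_unit_mod_def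
    by (intro conjI integers_mult bexI[of _ "x' * y'"]) (auto simp: ac_simps)
qed

lemma nf_unit_mod_one: "nf_unit_mod K q 1"
  unfolding nf_unit_mod_def using integers_one nf_cong_refl by auto

text \<open>If \<open>xa \<equiv> 1 (mod p)\<close> and \<open>xb \<equiv> 1 (mod q)\<close>, then \<open>x (a + b - xab) - 1 = -(xa - 1)(xb - 1)\<close>
  is divisible by \<open>pq\<close>.\<close>

lemma nf_unit_mod_mult_iff:
  assumes "p \<in> \<O>" "q \<in> \<O>"
  shows "nf_unit_mod K (p * q) x \<longleftrightarrow> nf_unit_mod K p x \<and> nf_unit_mod K q x"
proof
  assume "nf_unit_mod K (p * q) x"
  then show "nf_unit_mod K p x \<and> nf_unit_mod K q x"
    unfolding nf_unit_mod_def using nf_cong_dvd[OF assms(1)] nf_cong_dvd[OF assms(2)]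
    by (metis mult.commute)
next
  assume "nf_unit_mod K p x \<and> nf_unit_mod K q x"
  then obtain a b s r where O: "x \<in> \<O>" "a \<in> \<O>" "b \<in> \<O>" "s \<in> \<O>" "r \<in> \<O>"
    and s: "x * a - 1 = p * s" and r: "x * b - 1 = q * r"
    unfolding nf_unit_mod_def nf_cong_def by blast
  have "x * (a + b - x * a * b) - 1 = - ((x * a - 1) * (x * b - 1))"
    by (simp add: algebra_simps)
  also have "\<dots> = p * q * (- (s * r))"
    by (simp add: s r)
  finally show "nf_unit_mod K (p * q) x"
    unfolding nf_unit_mod_def nf_cong_def using O
    by (blast intro: integers_add integers_diff integers_mult integers_uminus)
qed

lemma inv_mod_cong:
  assumes "nf_unit_mod K (p * r) x" "p \<in> \<O>" "x' \<in> \<O>" "nf_cong K r x x'"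
  shows "nf_cong K r (inv_mod (p * r) x) (inv_mod r x')"
proof -
  have x: "x \<in> \<O>" using assms(1) unfolding nf_unit_mod_def by simp
  have inv: "nf_cong K r (x * inv_mod (p * r) x) 1"
    using nf_cong_dvd[OF assms(2) inv_mod(2)[OF assms(1)]] .
  then have "nf_unit_mod K r x'"
    using nf_unit_mod_cong[OF _ assms(3) nf_cong_sym[OF assms(4)]] x inv_mod(1)[OF assms(1)]
    unfolding nf_unit_mod_def by blast
  then show ?thesis
    using inv_mod_unique[OF x assms(3) inv_mod(1)[OF assms(1)] inv_mod(1) assms(4) inv inv_mod(2)]
    by blast
qed

lemma class_rep_unit_residue:
  assumes "c \<in> nf_unit_residues K q"
  shows "class_rep c \<in> \<O>" and "nf_unit_mod K q (class_rep c)"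
    and "nf_res K q (class_rep c) = c"
proof -
  obtain x where x: "nf_unit_mod K q x" "c = nf_res K q x"
    using assms unfolding nf_unit_residues_def by auto
  then have "x \<in> \<O>" unfolding nf_unit_mod_def by simp
  then show "class_rep c \<in> \<O>" "nf_res K q (class_rep c) = c"
    using x class_rep_nf_res nf_res_class_rep by auto
  show "nf_unit_mod K q (class_rep c)"
    using x class_rep_nf_res[OF \<open>x \<in> \<O>\<close>] nf_unit_mod_cong by auto
qed

lemma nf_res_in_unit_residues: "nf_unit_mod K q x \<Longrightarrow> nf_res K q x \<in> nf_unit_residues K q"
  unfolding nf_unit_residues_def by auto

section \<open>The residue field at a prime\<close>

lemma integers_poly_of_int: "x \<in> \<O> \<Longrightarrow> poly (map_poly (of_int :: int \<Rightarrow> complex) P) x \<in> \<O>"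
proof (induction P rule: pCons_induct)
  case (pCons c P)
  then show ?case by (simp add: map_poly_pCons integers_add integers_mult integers_of_int)
qed (simp add: integers_zero)

text \<open>The lowest nonzero coefficient of an integer polynomial vanishing at \<open>p\<close> is a multiple
  of \<open>p\<close>.\<close>

lemma nonzero_int_cong_zero:
  assumes "p \<in> \<O>" "p \<noteq> 0"
  obtains N :: int where "N \<noteq> 0" and "nf_cong K p (of_int N) 0"
proof -
  obtain P :: "int poly" where P: "lead_coeff P = 1" "poly (map_poly of_int P) p = 0"
    using assms(1) unfolding nf_O_def algebraic_integer_def by auto
  have "P \<noteq> 0 \<Longrightarrow> poly (map_poly of_int P) p = 0 \<Longrightarrow>
      \<exists>N::int. N \<noteq> 0 \<and> nf_cong K p (of_int N) 0" for P
  proof (induction P rule: pCons_induct)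
    case (pCons c P)
    have root: "of_int c + p * poly (map_poly of_int P) p = 0"
      using pCons.prems by (simp add: map_poly_pCons)
    show ?case
    proof (cases "c = 0")
      case False
      have "of_int c - 0 = p * (- poly (map_poly of_int P) p)"
        using root by (simp add: eq_neg_iff_add_eq_0)
      then show ?thesis
        using False integers_poly_of_int[OF assms(1)] integers_uminus
        unfolding nf_cong_def by blast
    next
      case True
      then show ?thesis using pCons root assms(2) by auto
    qed
  qed simp
  moreover have "P \<noteq> 0" using P(1) by auto
  ultimately show ?thesis using that P(2) by blast
qed

lemma power_eq_int_combination:
  assumes "a \<in> \<O>"
  obtains n where "\<And>k. \<exists>z :: nat \<Rightarrow> int. a ^ k = (\<Sum>i<n. of_int (z i) * a ^ i)"
proof -
  obtain P :: "int poly" where P: "lead_coeff P = 1" "poly (map_poly of_int P) a = 0"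
    using assms unfolding nf_O_def algebraic_integer_def by auto
  define n where "n = degree P"
  define c where "c = coeff P"
  have "degree (map_poly (of_int :: int \<Rightarrow> complex) P) = n"
    unfolding n_def by (rule degree_map_poly) simp
  then have "0 = (\<Sum>i<n. of_int (c i) * a ^ i) + a ^ n"
    using P unfolding poly_altdef
    by (simp add: coeff_map_poly c_def n_def lessThan_Suc_atMost[symmetric])
  then have top: "a ^ n = - (\<Sum>i<n. of_int (c i) * a ^ i)"
    by (simp add: eq_neg_iff_add_eq_0 add.commute)
  then obtain m where m: "n = Suc m" by (cases n) auto
  have "\<exists>z :: nat \<Rightarrow> int. a ^ k = (\<Sum>i<n. of_int (z i) * a ^ i)" for k
  proof (induction k)
    case 0
    have "(\<Sum>i<n. of_int (if i = 0 then 1 else 0) * a ^ i) = (\<Sum>i<n. if i = 0 then 1 else 0)"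
      by (rule sum.cong) auto
    also have "\<dots> = 1" unfolding m by simp
    finally have "(\<Sum>i<n. of_int (if i = 0 then 1 else 0) * a ^ i) = 1" .
    then show ?case by (metis power_0)
  next
    case (Suc k)
    then obtain z where z: "a ^ k = (\<Sum>i<n. of_int (z i) * a ^ i)" by blast
    define z' where "z' i = (if i = 0 then 0 else z (i - 1)) - z m * c i" for i
    have "a ^ Suc k = (\<Sum>i<m. of_int (z i) * a ^ Suc i) + of_int (z m) * a ^ n"
      using z unfolding m by (simp add: sum_distrib_left algebra_simps)
    also have "(\<Sum>i<m. of_int (z i) * a ^ Suc i)
        = (\<Sum>i<n. (if i = 0 then 0 else of_int (z (i - 1))) * a ^ i)"
      unfolding m sum.lessThan_Suc_shift by simp
    also have "of_int (z m) * a ^ n = (\<Sum>i<n. - of_int (z m * c i) * a ^ i)"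
      unfolding top by (simp add: sum_distrib_left sum_negf algebra_simps)
    also have "(\<Sum>i<n. (if i = 0 then 0 else of_int (z (i - 1))) * a ^ i)
        + (\<Sum>i<n. - of_int (z m * c i) * a ^ i) = (\<Sum>i<n. of_int (z' i) * a ^ i)"
      unfolding z'_def sum.distrib[symmetric] by (rule sum.cong) (auto simp: algebra_simps)
    finally show ?case by blast
  qed
  then show ?thesis using that by blast
qed

text \<open>Reducing the integer coefficients of \<open>power_eq_int_combination\<close> modulo a nonzero
  integer \<open>N \<equiv> 0 (mod p)\<close> leaves finitely many candidates for \<open>a\<^sup>k mod p\<close>.\<close>

lemma finite_power_residues:
  assumes "p \<in> \<O>" "p \<noteq> 0" "a \<in> \<O>"
  shows "finite (range (\<lambda>k. nf_res K p (a ^ k)))"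
proof -
  obtain N :: int where N: "N \<noteq> 0" "nf_cong K p (of_int N) 0"
    using nonzero_int_cong_zero[OF assms(1,2)] by blast
  obtain n where n: "\<And>k. \<exists>z :: nat \<Rightarrow> int. a ^ k = (\<Sum>i<n. of_int (z i) * a ^ i)"
    using power_eq_int_combination[OF assms(3)] by blast
  define val where "val ws = (\<Sum>i<n. of_int (ws ! i) * a ^ i)" for ws
  define W where "W = {ws :: int list. set ws \<subseteq> {0..<\<bar>N\<bar>} \<and> length ws = n}"
  have "nf_res K p (a ^ k) \<in> (\<lambda>ws. nf_res K p (val ws)) ` W" for k
  proof -
    obtain z where z: "a ^ k = (\<Sum>i<n. of_int (z i) * a ^ i)" using n by blast
    define w where "w = map (\<lambda>i. z i mod \<bar>N\<bar>) [0..<n]"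
    have "w \<in> W" unfolding w_def W_def using N(1) by auto
    define y where "y = of_int (sgn N) * (\<Sum>i<n. of_int (z i div \<bar>N\<bar>) * a ^ i)"
    have "a ^ k - val w = (\<Sum>i<n. of_int (\<bar>N\<bar> * (z i div \<bar>N\<bar>)) * a ^ i)"
      unfolding z val_def w_def sum_subtractf[symmetric]
      by (rule sum.cong) (simp_all add: minus_mod_eq_mult_div[symmetric] left_diff_distrib)
    also have "\<dots> = of_int N * y"
      unfolding y_def by (simp add: sum_distrib_left abs_sgn algebra_simps)
    finally have "a ^ k = of_int N * y + val w" by (simp add: diff_eq_eq)
    moreover have "y \<in> \<O>" "val w \<in> \<O>"
      unfolding y_def val_def using assms(3)
      by (auto intro!: integers_mult integers_sum integers_power integers_of_int)
    moreover have "nf_cong K p (of_int N * y) (0 * y)"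
      using nf_cong_mult[OF integers_of_int \<open>y \<in> \<O>\<close> N(2) nf_cong_refl] .
    ultimately have "nf_cong K p (a ^ k) (val w)"
      using nf_cong_add[OF _ nf_cong_refl, of p "of_int N * y" "0 * y" "val w"] by simp
    then have "nf_res K p (a ^ k) = nf_res K p (val w)"
      using \<open>val w \<in> \<O>\<close> nf_res_eq_iff integers_power[OF assms(3)] by blast
    then show ?thesis using \<open>w \<in> W\<close> by blast
  qed
  moreover have "finite W" unfolding W_def by (rule finite_lists_length_eq) simp
  ultimately show ?thesis by (meson finite_imageI finite_subset image_subsetI)
qed

lemma nf_prime_elemD:
  assumes "nf_prime_elem K p"
  shows "p \<in> \<O>" and "p \<noteq> 0" and "\<not> nf_cong K p 1 0"
    and "\<And>a b. a \<in> \<O> \<Longrightarrow> b \<in> \<O> \<Longrightarrow> nf_cong K p (a * b) 0 \<Longrightarrow>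
      nf_cong K p a 0 \<or> nf_cong K p b 0"
proof -
  have mem: "x \<in> principal_ideal K p \<longleftrightarrow> nf_cong K p x 0" for x
    unfolding nf_cong_def principal_ideal_def by auto
  show "p \<in> \<O>" "p \<noteq> 0" using assms unfolding nf_prime_elem_def by simp_all
  have "nf_prime_ideal K (principal_ideal K p)" using assms unfolding nf_prime_elem_def by simp
  then have "\<not> nf_cong K p 1 0" and
    prime: "\<forall>a\<in>\<O>. \<forall>b\<in>\<O>. nf_cong K p (a * b) 0 \<longrightarrow> nf_cong K p a 0 \<or> nf_cong K p b 0"
    unfolding nf_prime_ideal_def mem by simp_all
  then show "\<not> nf_cong K p 1 0"
    "\<And>a b. a \<in> \<O> \<Longrightarrow> b \<in> \<O> \<Longrightarrow> nf_cong K p (a * b) 0 \<Longrightarrow>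
      nf_cong K p a 0 \<or> nf_cong K p b 0"
    by simp_all
qed

text \<open>The powers of a nonzero class modulo \<open>p\<close> repeat, and cancelling in the domain \<open>O/p\<close>
  turns \<open>a\<^sup>i \<equiv> a\<^sup>j\<close> into \<open>a\<^sup>j\<^sup>-\<^sup>i \<equiv> 1\<close>.\<close>

lemma power_cong_one_mod_prime:
  assumes prime: "nf_prime_elem K p" and a: "a \<in> \<O>" and a0: "\<not> nf_cong K p a 0"
  obtains n where "n > 0" and "nf_cong K p (a ^ n) 1"
proof -
  have power_nonzero: "\<not> nf_cong K p (a ^ k) 0" for k
  proof (induction k)
    case 0
    show ?case using nf_prime_elemD(3)[OF prime] by simp
  next
    case (Suc k)
    then show ?case
      using nf_prime_elemD(4)[OF prime a integers_power[OF a]] a0 by auto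
  qed
  have "\<not> inj (\<lambda>k. nf_res K p (a ^ k))"
    using finite_power_residues[OF nf_prime_elemD(1,2)[OF prime] a] finite_imageD by blast
  then obtain i j where ij: "i < j" "nf_res K p (a ^ i) = nf_res K p (a ^ j)"
    unfolding inj_def by (metis linorder_neq_iff)
  then have "nf_cong K p (a ^ j) (a ^ i)"
    using nf_res_eq_iff integers_power[OF a] nf_cong_sym by blast
  then have "nf_cong K p (a ^ j - a ^ i) 0"
    using nf_cong_diff[OF _ nf_cong_refl[of p "a ^ i"]] by fastforce
  moreover have "a ^ j - a ^ i = a ^ i * (a ^ (j - i) - 1)"
    using ij(1) by (simp add: right_diff_distrib flip: power_add)
  ultimately have "nf_cong K p (a ^ i * (a ^ (j - i) - 1)) 0" by simp
  then have "nf_cong K p (a ^ (j - i) - 1) 0"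
    using nf_prime_elemD(4)[OF prime integers_power[OF a] integers_diff[OF integers_power[OF a]
        integers_one]] power_nonzero by blast
  then have "nf_cong K p (a ^ (j - i)) 1"
    using nf_cong_add[OF _ nf_cong_refl[of p 1]] by fastforce
  with ij(1) show ?thesis by (intro that[of "j - i"]) simp_all
qed

lemma nf_unit_mod_prime_iff:
  assumes prime: "nf_prime_elem K p" and a: "a \<in> \<O>"
  shows "nf_unit_mod K p a \<longleftrightarrow> \<not> nf_cong K p a 0"
proof
  assume "nf_unit_mod K p a"
  then obtain b where b: "b \<in> \<O>" "nf_cong K p (a * b) 1" unfolding nf_unit_mod_def by blast
  show "\<not> nf_cong K p a 0"
  proof
    assume "nf_cong K p a 0"
    then have "nf_cong K p (a * b) (0 * b)" using nf_cong_mult[OF a b(1)] nf_cong_refl by blast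
    then have "nf_cong K p 1 0" using b(2) by (auto intro: nf_cong_trans nf_cong_sym)
    then show False using nf_prime_elemD(3)[OF prime] by blast
  qed
next
  assume "\<not> nf_cong K p a 0"
  then obtain n where "n > 0" "nf_cong K p (a ^ n) 1"
    using power_cong_one_mod_prime[OF prime a] by blast
  moreover from \<open>n > 0\<close> have "a ^ n = a * a ^ (n - 1)" by (simp flip: power_Suc)
  ultimately show "nf_unit_mod K p a"
    unfolding nf_unit_mod_def using a integers_power by auto
qed

section \<open>Additive characters and Kloosterman sums\<close>

lemma codiff_subset_K: "nf_codiff K \<subseteq> K"
  unfolding nf_codiff_def by auto

lemma codiff_mult: "\<nu> \<in> nf_codiff K \<Longrightarrow> c \<in> \<O> \<Longrightarrow> \<nu> * c \<in> nf_codiff K"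
  unfolding nf_codiff_def
  by (auto simp: mult.assoc integers_mult K_mult subsetD[OF integers_subset_K])

lemma codiff_mult_divide_in_K:
  "\<nu> \<in> nf_codiff K \<Longrightarrow> x \<in> \<O> \<Longrightarrow> r \<in> \<O> \<Longrightarrow> \<nu> * x / r \<in> K"
  using codiff_subset_K integers_subset_K by (blast intro: K_divide K_mult)

lemma nf_e_add_codiff:
  assumes "z \<in> K" "\<nu> \<in> nf_codiff K" "c \<in> \<O>"
  shows "nf_e K (z + \<nu> * c) = nf_e K z"
proof -
  have "nf_e K (\<nu> * c) = 1"
    using assms(2,3) unfolding nf_e_eq_1_iff nf_codiff_def by simp
  then show ?thesis
    using assms codiff_subset_K integers_subset_K by (simp add: nf_e_add K_mult subset_iff)
qed

lemma nf_e_cong2: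
  assumes "\<nu> \<in> nf_codiff K" "\<mu> \<in> nf_codiff K" "q \<in> \<O>" "q \<noteq> 0" "a' \<in> \<O>" "b' \<in> \<O>"
    and "nf_cong K q a a'" "nf_cong K q b b'"
  shows "nf_e K ((\<nu> * a + \<mu> * b) / q) = nf_e K ((\<nu> * a' + \<mu> * b') / q)"
proof -
  obtain c d where cd: "c \<in> \<O>" "d \<in> \<O>" "a - a' = q * c" "b - b' = q * d"
    using assms(7,8) unfolding nf_cong_def by auto
  have "(\<nu> * a + \<mu> * b) / q = ((\<nu> * a' + \<mu> * b') / q + \<nu> * c) + \<mu> * d"
    using cd assms(4) by (simp add: field_simps)
  moreover have "(\<nu> * a' + \<mu> * b') / q \<in> K"
    using assms codiff_subset_K integers_subset_K
    by (intro K_divide K_add K_mult) auto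
  ultimately show ?thesis
    using assms cd codiff_subset_K integers_subset_K
    by (simp add: nf_e_add_codiff K_add K_mult subset_iff)
qed

lemma nf_e_cong:
  assumes "\<nu> \<in> nf_codiff K" "q \<in> \<O>" "q \<noteq> 0" "a' \<in> \<O>" "nf_cong K q a a'"
  shows "nf_e K (\<nu> * a / q) = nf_e K (\<nu> * a' / q)"
  using nf_e_cong2[OF assms(1,1,2,3,4) integers_zero assms(5) nf_cong_refl[of q 0]] by simp

lemma bij_betw_residues_translate:
  assumes "y \<in> \<O>"
  shows "bij_betw (\<lambda>r. nf_res K p (class_rep r + y)) (nf_residues K p) (nf_residues K p)"
proof -
  define shift where "shift t r = nf_res K p (class_rep r + t)" for t r
  have shift: "shift t r \<in> nf_residues K p" "shift (- t) (shift t r) = r"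
    if "r \<in> nf_residues K p" "t \<in> \<O>" for t r
  proof -
    have rt: "class_rep r + t \<in> \<O>" using that class_rep_residue integers_add by blast
    then show "shift t r \<in> nf_residues K p" unfolding shift_def by (rule nf_res_in_residues)
    have "nf_cong K p (class_rep (shift t r) + - t) (class_rep r + t + - t)"
      unfolding shift_def using nf_cong_add[OF class_rep_nf_res(2)[OF rt] nf_cong_refl] .
    moreover have "class_rep (shift t r) + - t \<in> \<O>" "class_rep r + t + - t \<in> \<O>"
      unfolding shift_def using class_rep_nf_res(1)[OF rt] class_rep_residue(1)[OF that(1)] that(2)
      by (auto intro: integers_diff)
    ultimately have "shift (- t) (shift t r) = nf_res K p (class_rep r + t + - t)"
      unfolding shift_def[of "- t"] using nf_res_eq_iff by blast
    then show "shift (- t) (shift t r) = r" using class_rep_residue(2)[OF that(1)] by simp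
  qed
  have "bij_betw (shift y) (nf_residues K p) (nf_residues K p)"
    by (rule bij_betw_byWitness[where f' = "shift (- y)"])
      (use shift[of _ y] shift[of _ "- y"] assms integers_uminus in auto)
  then show ?thesis unfolding shift_def .
qed

lemma nf_e_ne_1_if_not_dvd:
  assumes "generates_different K \<delta>" "\<nu> \<in> nf_codiff K" "p \<in> \<O>" "p \<noteq> 0"
    and "\<not> nf_dvd K p (\<delta> * \<nu>)"
  obtains y where "y \<in> \<O>" and "nf_e K (\<nu> * y / p) \<noteq> 1"
proof -
  have "\<exists>y\<in>\<O>. nf_trace K (\<nu> / p * y) \<notin> \<int>"
  proof (rule ccontr)
    assume "\<not> ?thesis"
    then have "\<nu> / p \<in> nf_codiff K"
      unfolding nf_codiff_def using assms(2,3) codiff_subset_K integers_subset_K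
      by (auto intro: K_divide)
    then obtain x where "x \<in> \<O>" "\<nu> / p = x / \<delta>"
      using assms(1) unfolding generates_different_def by auto
    moreover have "\<delta> \<noteq> 0" using assms(1) unfolding generates_different_def by simp
    ultimately have "\<delta> * \<nu> = p * x" "x \<in> \<O>" using assms(4) by (simp_all add: field_simps)
    then show False using assms(3,5) unfolding nf_dvd_def by blast
  qed
  then show ?thesis using that by (auto simp: nf_e_eq_1_iff)
qed

text \<open>Translation by \<open>y\<close> permutes \<open>O/p\<close> and multiplies each summand by \<open>e(\<nu>y/p) \<noteq> 1\<close>.\<close>

lemma sum_residues_nf_e_eq_0:
  assumes "generates_different K \<delta>" "\<nu> \<in> nf_codiff K" "p \<in> \<O>" "p \<noteq> 0"
    and "\<not> nf_dvd K p (\<delta> * \<nu>)"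
  shows "(\<Sum>r\<in>nf_residues K p. nf_e K (\<nu> * class_rep r / p)) = 0"
proof -
  obtain y where y: "y \<in> \<O>" "nf_e K (\<nu> * y / p) \<noteq> 1"
    using nf_e_ne_1_if_not_dvd[OF assms] .
  let ?g = "\<lambda>r. nf_e K (\<nu> * class_rep r / p)"
  have "?g (nf_res K p (class_rep r + y)) = ?g r * nf_e K (\<nu> * y / p)"
    if "r \<in> nf_residues K p" for r
  proof -
    have r: "class_rep r \<in> \<O>" using that class_rep_residue by blast
    then have "?g (nf_res K p (class_rep r + y)) = nf_e K (\<nu> * class_rep r / p + \<nu> * y / p)"
      using nf_e_cong[OF assms(2-4) _ class_rep_nf_res(2)] y(1)
      by (simp add: integers_add distrib_left add_divide_distrib)
    also have "\<dots> = ?g r * nf_e K (\<nu> * y / p)"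
      using codiff_mult_divide_in_K[OF assms(2) r assms(3)]
        codiff_mult_divide_in_K[OF assms(2) y(1) assms(3)]
      by (rule nf_e_add)
    finally show ?thesis .
  qed
  then have "(\<Sum>r\<in>nf_residues K p. ?g r) = (\<Sum>r\<in>nf_residues K p. ?g r) * nf_e K (\<nu> * y / p)"
    using sum.reindex_bij_betw[OF bij_betw_residues_translate[OF y(1), where p = p], of ?g]
    by (simp add: sum_distrib_right)
  then show ?thesis using y(2) by (metis mult_cancel_left1)
qed

definition kloosterman_term :: "complex \<Rightarrow> complex \<Rightarrow> complex \<Rightarrow> complex \<Rightarrow> complex" where
  "kloosterman_term a b r x = nf_e K ((a * x + b * inv_mod r x) / r)"

lemma kloosterman_eq_sum:
  "kloosterman K a b r = (\<Sum>c\<in>nf_unit_residues K r. kloosterman_term a b r (class_rep c))"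
  unfolding kloosterman_def kloosterman_term_def class_rep_def inv_mod_def Let_def ..

lemma bij_betw_unit_residues_scale:
  assumes "w \<in> \<O>" "w' \<in> \<O>" "nf_cong K r (w * w') 1"
  shows "bij_betw (\<lambda>d. nf_res K r (w * class_rep d)) (nf_unit_residues K r) (nf_unit_residues K r)"
proof -
  define scale where "scale v d = nf_res K r (v * class_rep d)" for v d
  have scale: "scale v d \<in> nf_unit_residues K r" "scale v' (scale v d) = d"
    if "d \<in> nf_unit_residues K r" "v \<in> \<O>" "v' \<in> \<O>" "nf_cong K r (v' * v) 1" for v v' d
  proof -
    note d = class_rep_unit_residue[OF that(1)]
    have v: "nf_unit_mod K r v" unfolding nf_unit_mod_def using that(2-4) by (auto simp: ac_simps)
    show "scale v d \<in> nf_unit_residues K r"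
      unfolding scale_def using nf_res_in_unit_residues nf_unit_mod_mult[OF v d(2)] by blast
    have vd: "v * class_rep d \<in> \<O>" using that(2) d(1) integers_mult by blast
    have "nf_cong K r (v' * class_rep (scale v d)) (v' * (v * class_rep d))"
      unfolding scale_def using nf_cong_mult_left[OF that(3) class_rep_nf_res(2)[OF vd]] .
    moreover have "nf_cong K r ((v' * v) * class_rep d) (1 * class_rep d)"
      using nf_cong_mult[OF integers_mult[OF that(3,2)] d(1) that(4) nf_cong_refl] .
    ultimately have "nf_cong K r (v' * class_rep (scale v d)) (class_rep d)"
      using nf_cong_trans by (simp add: mult.assoc)
    moreover have "v' * class_rep (scale v d) \<in> \<O>"
      unfolding scale_def using that(3) class_rep_nf_res(1)[OF vd] integers_mult by blast
    ultimately show "scale v' (scale v d) = d"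
      using nf_res_eq_iff d(1) d(3) unfolding scale_def[of v'] by metis
  qed
  have "bij_betw (scale w) (nf_unit_residues K r) (nf_unit_residues K r)"
    by (rule bij_betw_byWitness[where f' = "scale w'"])
      (use scale[of _ w w'] scale[of _ w' w] assms in \<open>auto simp: mult.commute\<close>)
  then show ?thesis unfolding scale_def .
qed

lemma kloosterman_eq_sum_scaled:
  assumes "r \<in> \<O>" "r \<noteq> 0" "a \<in> nf_codiff K" "b \<in> nf_codiff K"
    and "w \<in> \<O>" "w' \<in> \<O>" "nf_cong K r (w * w') 1"
  shows "kloosterman K a b r = (\<Sum>d\<in>nf_unit_residues K r.
    nf_e K ((a * (w * class_rep d) + b * (w' * inv_mod r (class_rep d))) / r))"
proof -
  let ?scale = "\<lambda>d. nf_res K r (w * class_rep d)"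
  note bij = bij_betw_unit_residues_scale[OF assms(5-7)]
  have "kloosterman K a b r
      = (\<Sum>d\<in>nf_unit_residues K r. kloosterman_term a b r (class_rep (?scale d)))"
    unfolding kloosterman_eq_sum
    using sum.reindex_bij_betw[OF bij, of "\<lambda>c. kloosterman_term a b r (class_rep c)"] by simp
  also have "\<dots> = (\<Sum>d\<in>nf_unit_residues K r.
      nf_e K ((a * (w * class_rep d) + b * (w' * inv_mod r (class_rep d))) / r))"
  proof (rule sum.cong)
    fix d assume "d \<in> nf_unit_residues K r"
    note d = class_rep_unit_residue[OF this]
    let ?x = "class_rep (?scale d)" and ?y = "class_rep d"
    have wy: "w * ?y \<in> \<O>" using assms(5) d(1) integers_mult by blast
    have x: "?x \<in> \<O>" "nf_cong K r ?x (w * ?y)"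
      using class_rep_nf_res[OF wy] by auto
    have "nf_unit_mod K r ?x"
      using bij_betwE[OF bij] \<open>d \<in> _\<close> class_rep_unit_residue(2) by blast
    have "nf_cong K r ((w * ?y) * (w' * inv_mod r ?y)) 1"
      using nf_cong_mult[OF integers_mult[OF assms(5,6)] integers_one assms(7) inv_mod(2)[OF d(2)]]
      by (simp add: ac_simps)
    then have "nf_cong K r (inv_mod r ?x) (w' * inv_mod r ?y)"
      using inv_mod_unique[OF x(1) wy inv_mod(1) _ x(2) inv_mod(2)] assms(6) inv_mod(1)[OF d(2)]
        \<open>nf_unit_mod K r ?x\<close> integers_mult by blast
    then show "kloosterman_term a b r ?x
        = nf_e K ((a * (w * ?y) + b * (w' * inv_mod r ?y)) / r)"
      unfolding kloosterman_term_def
      using nf_e_cong2[OF assms(3,4,1,2) wy _ x(2)] assms(6) inv_mod(1)[OF d(2)] integers_mult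
      by blast
  qed simp
  finally show ?thesis .
qed

end

section \<open>Lifting units from \<open>q/p\<close> to \<open>q\<close>\<close>

locale prime_fibration = ring_of_integers +
  fixes p q q1 :: complex
  assumes prime: "nf_prime_elem K p"
    and q1_integer: "q1 \<in> \<O>" and q1_nonzero: "q1 \<noteq> 0"
    and q_eq: "q = p * q1"
begin

lemma p_integer: "p \<in> \<O>" and p_nonzero: "p \<noteq> 0"
  using nf_prime_elemD(1,2)[OF prime] .

lemma q_integer: "q \<in> \<O>" and q_nonzero: "q \<noteq> 0"
  using q_eq p_integer p_nonzero q1_integer q1_nonzero integers_mult by auto

definition lift :: "complex set \<Rightarrow> complex set \<Rightarrow> complex set" where
  "lift d r = nf_res K q (class_rep d + q1 * class_rep r)"

definition unit_lifts :: "complex set \<Rightarrow> complex set set" where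
  "unit_lifts d =
     {r \<in> nf_residues K p. nf_unit_mod K q (class_rep d + q1 * class_rep r)}"

lemma class_rep_lift:
  assumes "d \<in> nf_unit_residues K q1" "r \<in> nf_residues K p"
  shows "class_rep d + q1 * class_rep r \<in> \<O>" and "class_rep (lift d r) \<in> \<O>"
    and "nf_cong K q (class_rep (lift d r)) (class_rep d + q1 * class_rep r)"
    and "nf_cong K q1 (class_rep (lift d r)) (class_rep d)"
proof -
  have r: "class_rep r \<in> \<O>" using class_rep_residue(1)[OF assms(2)] .
  show z: "class_rep d + q1 * class_rep r \<in> \<O>"
    using class_rep_unit_residue(1)[OF assms(1)] r q1_integer integers_add integers_mult by simp
  show "class_rep (lift d r) \<in> \<O>"
    and x: "nf_cong K q (class_rep (lift d r)) (class_rep d + q1 * class_rep r)"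
    unfolding lift_def using class_rep_nf_res[OF z] by simp_all
  have "nf_cong K q1 (class_rep d + q1 * class_rep r) (class_rep d)"
    using nf_cong_add_multiple[OF r] .
  moreover have "nf_cong K q1 (class_rep (lift d r)) (class_rep d + q1 * class_rep r)"
    using nf_cong_dvd[OF p_integer] x q_eq by simp
  ultimately show "nf_cong K q1 (class_rep (lift d r)) (class_rep d)"
    using nf_cong_trans by blast
qed

lemma unit_lifts_iff:
  assumes "d \<in> nf_unit_residues K q1"
  shows "r \<in> unit_lifts d \<longleftrightarrow>
    r \<in> nf_residues K p \<and> nf_unit_mod K p (class_rep d + q1 * class_rep r)"
proof -
  have "nf_unit_mod K q1 (class_rep d + q1 * class_rep r)" if "r \<in> nf_residues K p"
    using nf_unit_mod_cong[OF class_rep_unit_residue(2)[OF assms] class_rep_lift(1)[OF assms that]]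
      nf_cong_add_multiple class_rep_residue(1)[OF that] by blast
  moreover have "nf_unit_mod K q z \<longleftrightarrow> nf_unit_mod K p z \<and> nf_unit_mod K q1 z" for z
    using nf_unit_mod_mult_iff[OF p_integer q1_integer] q_eq by simp
  ultimately show ?thesis unfolding unit_lifts_def by blast
qed

lemma lift_in_unit_residues:
  "r \<in> unit_lifts d \<Longrightarrow> lift d r \<in> nf_unit_residues K q"
  unfolding unit_lifts_def lift_def using nf_res_in_unit_residues by blast

lemma lift_eq_iff:
  assumes "d \<in> nf_unit_residues K q1" "d' \<in> nf_unit_residues K q1"
    and "r \<in> nf_residues K p" "r' \<in> nf_residues K p"
  shows "lift d r = lift d' r' \<longleftrightarrow> d = d' \<and> r = r'"
proof
  assume eq: "lift d r = lift d' r'"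
  note z = class_rep_lift(1)[OF assms(1,3)] class_rep_lift(1)[OF assms(2,4)]
  have "nf_cong K q (class_rep d + q1 * class_rep r) (class_rep d' + q1 * class_rep r')"
    using eq unfolding lift_def using nf_res_eq_iff[OF z] by blast
  then obtain c where c: "c \<in> \<O>"
    and diff: "class_rep d + q1 * class_rep r - (class_rep d' + q1 * class_rep r') = p * q1 * c"
    unfolding nf_cong_def q_eq by blast
  have r: "class_rep r \<in> \<O>" "class_rep r' \<in> \<O>"
    using assms(3,4) class_rep_residue(1) by blast+
  have "class_rep d - class_rep d' = q1 * (p * c - (class_rep r - class_rep r'))"
    using diff by (simp add: algebra_simps)
  moreover have "p * c - (class_rep r - class_rep r') \<in> \<O>"
    using p_integer c r by (intro integers_diff integers_mult)
  ultimately have "nf_cong K q1 (class_rep d) (class_rep d')"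
    unfolding nf_cong_def by blast
  then have "d = d'"
    using nf_res_eq_iff class_rep_unit_residue(1,3) assms(1,2) by metis
  then have "q1 * (class_rep r - class_rep r') = q1 * (p * c)"
    using diff by (simp add: algebra_simps)
  then have "class_rep r - class_rep r' = p * c"
    using q1_nonzero by simp
  then have "nf_cong K p (class_rep r) (class_rep r')"
    unfolding nf_cong_def using c by blast
  then have "r = r'"
    using nf_res_eq_iff class_rep_residue assms(3,4) by metis
  with \<open>d = d'\<close> show "d = d' \<and> r = r'" ..
qed (simp)

lemma lift_surj:
  assumes "c \<in> nf_unit_residues K q"
  obtains d r where "d \<in> nf_unit_residues K q1" "r \<in> unit_lifts d" "c = lift d r"
proof -
  note x = class_rep_unit_residue[OF assms]
  define d where "d = nf_res K q1 (class_rep c)"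
  have "nf_unit_mod K q1 (class_rep c)"
    using x(2) nf_unit_mod_mult_iff[OF p_integer q1_integer] q_eq by simp
  then have d: "d \<in> nf_unit_residues K q1"
    unfolding d_def by (rule nf_res_in_unit_residues)
  have "nf_cong K q1 (class_rep c) (class_rep d)"
    unfolding d_def using class_rep_nf_res[OF x(1)] nf_cong_sym by blast
  then obtain t where t: "t \<in> \<O>" "class_rep c - class_rep d = q1 * t"
    unfolding nf_cong_def by blast
  define r where "r = nf_res K p t"
  have r: "r \<in> nf_residues K p" unfolding r_def using t(1) by (rule nf_res_in_residues)
  obtain e where e: "e \<in> \<O>" "class_rep r - t = p * e"
    unfolding r_def using class_rep_nf_res[OF t(1)] unfolding nf_cong_def by blast
  have "class_rep d + q1 * class_rep r - class_rep c = q * e"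
    using t(2) e(2) q_eq by (simp add: algebra_simps)
  then have z: "nf_cong K q (class_rep d + q1 * class_rep r) (class_rep c)"
    unfolding nf_cong_def using e(1) by blast
  then have "lift d r = c"
    unfolding lift_def using nf_res_eq_iff class_rep_lift(1)[OF d r] x(1,3) by metis
  moreover have "r \<in> unit_lifts d"
    unfolding unit_lifts_def
    using r nf_unit_mod_cong[OF x(2) class_rep_lift(1)[OF d r] z] by blast
  ultimately show ?thesis using that d by blast
qed

lemma lift_bij:
  "bij_betw (\<lambda>(d, r). lift d r)
     (SIGMA d:nf_unit_residues K q1. unit_lifts d) (nf_unit_residues K q)"
proof (rule bij_betwI')
  show "((\<lambda>(d, r). lift d r) x = (\<lambda>(d, r). lift d r) y) = (x = y)"
    if "x \<in> (SIGMA d:nf_unit_residues K q1. unit_lifts d)"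
      "y \<in> (SIGMA d:nf_unit_residues K q1. unit_lifts d)" for x y
    using that lift_eq_iff unfolding unit_lifts_def by auto
  show "(\<lambda>(d, r). lift d r) x \<in> nf_unit_residues K q"
    if "x \<in> (SIGMA d:nf_unit_residues K q1. unit_lifts d)" for x
    using that lift_in_unit_residues by auto
  show "\<exists>x\<in>SIGMA d:nf_unit_residues K q1. unit_lifts d. c = (\<lambda>(d, r). lift d r) x"
    if "c \<in> nf_unit_residues K q" for c
    using lift_surj[OF that] by blast
qed

lemma unit_lifts_if_dvd:
  assumes "nf_cong K p q1 0" "d \<in> nf_unit_residues K q1"
  shows "unit_lifts d = nf_residues K p"
proof -
  obtain s where s: "s \<in> \<O>" "q1 = p * s" using assms(1) unfolding nf_cong_def by auto
  have "nf_unit_mod K p (class_rep d)"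
    using class_rep_unit_residue(2)[OF assms(2)] nf_unit_mod_mult_iff[OF p_integer s(1)] s(2)
    by simp
  moreover have "nf_cong K p (class_rep d + q1 * class_rep r) (class_rep d)"
    if "r \<in> nf_residues K p" for r
    using nf_cong_add_multiple[of "s * class_rep r" p "class_rep d"] s
      class_rep_residue(1)[OF that] integers_mult by (simp add: ac_simps)
  ultimately show ?thesis
    using unit_lifts_iff[OF assms(2)] nf_unit_mod_cong class_rep_lift(1)[OF assms(2)] by blast
qed

text \<open>If \<open>pu + q\<^sub>1v = 1\<close>, then \<open>v(d + q\<^sub>1r) \<equiv> r + vd (mod p)\<close>, so \<open>d + q\<^sub>1r\<close> is a non-unit
  modulo \<open>p\<close> exactly for \<open>r \<equiv> -vd\<close>.\<close>

lemma unit_lifts_if_coprime: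
  assumes "p * u + q1 * v = 1" "u \<in> \<O>" "v \<in> \<O>" "d \<in> nf_unit_residues K q1"
  shows "unit_lifts d = nf_residues K p - {nf_res K p (- v * class_rep d)}"
proof -
  have x: "class_rep d \<in> \<O>" using class_rep_unit_residue(1)[OF assms(4)] .
  have "nf_cong K p (class_rep d + q1 * y) 0 \<longleftrightarrow> nf_cong K p y (- v * class_rep d)"
    if y: "y \<in> \<O>" for y
  proof
    assume "nf_cong K p (class_rep d + q1 * y) 0"
    then obtain c where "c \<in> \<O>" "class_rep d + q1 * y = p * c" unfolding nf_cong_def by auto
    moreover have "y - - v * class_rep d = v * (class_rep d + q1 * y) + p * (u * y)"
      by (subst (1) mult_1_right[symmetric, of y], subst assms(1)[symmetric])
        (simp add: algebra_simps)
    ultimately show "nf_cong K p y (- v * class_rep d)"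
      unfolding nf_cong_def using assms(2,3) y
      by (intro bexI[of _ "v * c + u * y"]) (simp_all add: algebra_simps integers_add integers_mult)
  next
    assume "nf_cong K p y (- v * class_rep d)"
    then obtain c where "c \<in> \<O>" "y + v * class_rep d = p * c" unfolding nf_cong_def by auto
    moreover have "class_rep d + q1 * y = p * (u * class_rep d) + q1 * (y + v * class_rep d)"
      by (subst (1) mult_1_right[symmetric, of "class_rep d"], subst assms(1)[symmetric])
        (simp add: algebra_simps)
    ultimately show "nf_cong K p (class_rep d + q1 * y) 0"
      unfolding nf_cong_def using assms(2) x q1_integer
      by (intro bexI[of _ "u * class_rep d + q1 * c"])
        (simp_all add: algebra_simps integers_add integers_mult)
  qed
  moreover have "- v * class_rep d \<in> \<O>" using assms(3) x integers_mult integers_uminus by simp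
  ultimately have "r \<in> unit_lifts d \<longleftrightarrow> r \<in> nf_residues K p \<and> r \<noteq> nf_res K p (- v * class_rep d)"
    for r
    using unit_lifts_iff[OF assms(4)] nf_unit_mod_prime_iff[OF prime class_rep_lift(1)[OF assms(4)]]
      nf_res_eq_iff class_rep_residue[of r p] by metis
  then show ?thesis by blast
qed

lemma bezout_if_not_dvd:
  assumes "\<not> nf_cong K p q1 0"
  obtains u v where "u \<in> \<O>" "v \<in> \<O>" "p * u + q1 * v = 1"
proof -
  obtain v c where "v \<in> \<O>" "c \<in> \<O>" "q1 * v - 1 = p * c"
    using nf_unit_mod_prime_iff[OF prime q1_integer] assms
    unfolding nf_unit_mod_def nf_cong_def by blast
  then show ?thesis using that[of "- c" v] integers_uminus by (simp add: algebra_simps)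
qed

lemma residues_zero_one:
  "nf_res K p 0 \<in> nf_residues K p" "nf_res K p 1 \<in> nf_residues K p"
  "nf_res K p 0 \<noteq> nf_res K p 1"
  using nf_res_in_residues integers_zero integers_one nf_res_eq_iff nf_cong_sym
    nf_prime_elemD(3)[OF prime] by metis+

lemma unit_lifts_nonempty_cofinite:
  assumes "d \<in> nf_unit_residues K q1"
  shows "unit_lifts d \<noteq> {}" and "\<exists>r. nf_residues K p \<subseteq> insert r (unit_lifts d)"
proof -
  have "\<exists>r. unit_lifts d = nf_residues K p - {r}" if coprime: "\<not> nf_cong K p q1 0"
  proof -
    obtain u v where "u \<in> \<O>" "v \<in> \<O>" "p * u + q1 * v = 1"
      by (rule bezout_if_not_dvd[OF coprime])
    then show ?thesis using unit_lifts_if_coprime[OF _ _ _ assms] by blast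
  qed
  then obtain r where "unit_lifts d = nf_residues K p \<or> unit_lifts d = nf_residues K p - {r}"
    using unit_lifts_if_dvd[OF _ assms] by blast
  moreover have "nf_residues K p - {r} \<noteq> {}"
    using residues_zero_one by blast
  ultimately have "unit_lifts d \<noteq> {} \<and> (\<exists>r. nf_residues K p \<subseteq> insert r (unit_lifts d))"
    using residues_zero_one(1) by auto
  then show "unit_lifts d \<noteq> {}" "\<exists>r. nf_residues K p \<subseteq> insert r (unit_lifts d)" by blast+
qed

lemma finite_unit_residues_iff:
  "finite (nf_unit_residues K q) \<longleftrightarrow> finite (nf_residues K p) \<and> finite (nf_unit_residues K q1)"
proof -
  let ?S = "SIGMA d:nf_unit_residues K q1. unit_lifts d"
  have lifts: "unit_lifts d \<subseteq> nf_residues K p" for d unfolding unit_lifts_def by blast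
  have "finite ?S \<longleftrightarrow> finite (nf_residues K p) \<and> finite (nf_unit_residues K q1)"
  proof
    assume fin: "finite ?S"
    have "nf_unit_residues K q1 \<subseteq> fst ` ?S"
    proof
      fix d assume d: "d \<in> nf_unit_residues K q1"
      then obtain r where "r \<in> unit_lifts d" using unit_lifts_nonempty_cofinite(1) by blast
      then show "d \<in> fst ` ?S" using d by (intro image_eqI[of _ fst "(d, r)"]) auto
    qed
    moreover have d1: "nf_res K q1 1 \<in> nf_unit_residues K q1"
      by (rule nf_res_in_unit_residues[OF nf_unit_mod_one])
    then have "unit_lifts (nf_res K q1 1) \<subseteq> snd ` ?S" by force
    ultimately show "finite (nf_residues K p) \<and> finite (nf_unit_residues K q1)"
      using fin unit_lifts_nonempty_cofinite(2)[OF d1] finite_subset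
      by (metis finite_imageI finite_insert)
  next
    assume "finite (nf_residues K p) \<and> finite (nf_unit_residues K q1)"
    then show "finite ?S" using lifts by (auto intro: finite_subset)
  qed
  then show ?thesis using bij_betw_finite[OF lift_bij] by simp
qed

lemma sum_unit_residues_eq_sum_lifts:
  assumes "finite (nf_residues K p)" "finite (nf_unit_residues K q1)"
  shows "(\<Sum>c\<in>nf_unit_residues K q. g c) =
    (\<Sum>d\<in>nf_unit_residues K q1. \<Sum>r\<in>unit_lifts d. g (lift d r))"
proof -
  have "finite (unit_lifts d)" for d
    using assms(1) unfolding unit_lifts_def by simp
  then have "(\<Sum>d\<in>nf_unit_residues K q1. \<Sum>r\<in>unit_lifts d. g (lift d r))
      = (\<Sum>(d, r)\<in>Sigma (nf_unit_residues K q1) unit_lifts. g (lift d r))"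
    using assms(2) by (intro sum.Sigma) auto
  also have "\<dots> = (\<Sum>c\<in>nf_unit_residues K q. g c)"
    using sum.reindex_bij_betw[OF lift_bij, of g] by (simp add: split_def)
  finally show ?thesis ..
qed

section \<open>The recursion at a prime\<close>

lemma kloosterman_term_lift_reduce:
  assumes "\<nu> \<in> nf_codiff K" "\<mu> \<in> nf_codiff K" "m \<ge> 1" "l \<ge> 1"
    and d: "d \<in> nf_unit_residues K q1" and r: "r \<in> unit_lifts d"
  shows "kloosterman_term (\<nu> * p ^ m) (\<mu> * p ^ l) q (class_rep (lift d r))
    = kloosterman_term (\<nu> * p ^ (m - 1)) (\<mu> * p ^ (l - 1)) q1 (class_rep d)"
proof -
  have rR: "r \<in> nf_residues K p" using r unfolding unit_lifts_def by blast
  let ?x = "class_rep (lift d r)"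
  have x: "nf_unit_mod K (p * q1) ?x"
    using class_rep_unit_residue(2)[OF lift_in_unit_residues[OF r]] q_eq by simp
  have "p ^ m = p * p ^ (m - 1)" "p ^ l = p * p ^ (l - 1)"
    using assms(3,4) by (simp_all flip: power_Suc)
  then have "(\<nu> * p ^ m * ?x + \<mu> * p ^ l * inv_mod q ?x) / q
      = (\<nu> * p ^ (m - 1) * ?x + \<mu> * p ^ (l - 1) * inv_mod q ?x) / q1"
    unfolding q_eq using p_nonzero q1_nonzero by (simp add: field_simps)
  also have "nf_e K \<dots> = nf_e K ((\<nu> * p ^ (m - 1) * class_rep d
      + \<mu> * p ^ (l - 1) * inv_mod q1 (class_rep d)) / q1)"
    using nf_e_cong2[OF codiff_mult codiff_mult q1_integer q1_nonzero
        class_rep_unit_residue(1)[OF d] inv_mod(1)[OF class_rep_unit_residue(2)[OF d]]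
        class_rep_lift(4)[OF d rR] inv_mod_cong[OF x p_integer class_rep_unit_residue(1)[OF d]
          class_rep_lift(4)[OF d rR]]]
      assms(1,2) p_integer integers_power q_eq by (simp add: mult.assoc)
  finally show ?thesis unfolding kloosterman_term_def by (simp add: mult.assoc)
qed

lemma kloosterman_term_lift_split:
  assumes nu: "\<nu> \<in> nf_codiff K" and mu: "\<mu> \<in> nf_codiff K" and "n \<ge> 1"
    and d: "d \<in> nf_unit_residues K q1" and r: "r \<in> unit_lifts d"
  shows "kloosterman_term \<nu> (\<mu> * p ^ n) q (class_rep (lift d r))
    = nf_e K (\<mu> * p ^ (n - 1) * inv_mod q1 (class_rep d) / q1)
      * (nf_e K (\<nu> * class_rep d / q) * nf_e K (\<nu> * class_rep r / p))"
proof -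
  have rR: "r \<in> nf_residues K p" using r unfolding unit_lifts_def by blast
  note y = class_rep_unit_residue[OF d]
  have rO: "class_rep r \<in> \<O>" using class_rep_residue(1)[OF rR] .
  let ?x = "class_rep (lift d r)" and ?\<mu> = "\<mu> * p ^ (n - 1)"
  have x: "nf_unit_mod K (p * q1) ?x"
    using class_rep_unit_residue(2)[OF lift_in_unit_residues[OF r]] q_eq by simp
  have mu': "?\<mu> \<in> nf_codiff K" using mu p_integer integers_power codiff_mult by blast
  have "p ^ n = p * p ^ (n - 1)" using assms(3) by (simp flip: power_Suc)
  then have "(\<nu> * ?x + \<mu> * p ^ n * inv_mod q ?x) / q = \<nu> * ?x / q + ?\<mu> * inv_mod q ?x / q1"
    unfolding q_eq using p_nonzero q1_nonzero by (simp add: field_simps)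
  then have "kloosterman_term \<nu> (\<mu> * p ^ n) q ?x
      = nf_e K (\<nu> * ?x / q) * nf_e K (?\<mu> * inv_mod q ?x / q1)"
    unfolding kloosterman_term_def
    using nu mu' class_rep_lift(2)[OF d rR] inv_mod(1)[OF x] q_integer q1_integer q_eq
    by (simp add: nf_e_add codiff_mult_divide_in_K)
  also have "nf_e K (\<nu> * ?x / q) = nf_e K (\<nu> * (class_rep d + q1 * class_rep r) / q)"
    using nf_e_cong[OF nu q_integer q_nonzero class_rep_lift(1,3)[OF d rR]] .
  also have "\<nu> * (class_rep d + q1 * class_rep r) / q = \<nu> * class_rep d / q + \<nu> * class_rep r / p"
    unfolding q_eq using p_nonzero q1_nonzero by (simp add: field_simps)
  also have "nf_e K \<dots> = nf_e K (\<nu> * class_rep d / q) * nf_e K (\<nu> * class_rep r / p)"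
    using nu y(1) rO p_integer q_integer by (simp add: nf_e_add codiff_mult_divide_in_K)
  also have "nf_e K (?\<mu> * inv_mod q ?x / q1) = nf_e K (?\<mu> * inv_mod q1 (class_rep d) / q1)"
    using nf_e_cong[OF mu' q1_integer q1_nonzero inv_mod(1)[OF y(2)]
        inv_mod_cong[OF x p_integer y(1) class_rep_lift(4)[OF d rR]]] q_eq by simp
  finally show ?thesis by (simp add: ac_simps)
qed

lemma kloosterman_eq_sum_card_lifts:
  assumes "finite (nf_residues K p)" "finite (nf_unit_residues K q1)"
    and "\<nu> \<in> nf_codiff K" "\<mu> \<in> nf_codiff K" "m \<ge> 1" "l \<ge> 1"
  shows "kloosterman K (\<nu> * p ^ m) (\<mu> * p ^ l) q = (\<Sum>d\<in>nf_unit_residues K q1.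
    of_nat (card (unit_lifts d))
    * kloosterman_term (\<nu> * p ^ (m - 1)) (\<mu> * p ^ (l - 1)) q1 (class_rep d))"
  unfolding kloosterman_eq_sum sum_unit_residues_eq_sum_lifts[OF assms(1,2)]
  by (intro sum.cong refl) (simp add: kloosterman_term_lift_reduce[OF assms(3-6)])

lemma kloosterman_eq_sum_lift_characters:
  assumes "finite (nf_residues K p)" "finite (nf_unit_residues K q1)"
    and "\<nu> \<in> nf_codiff K" "\<mu> \<in> nf_codiff K" "n \<ge> 1"
  shows "kloosterman K \<nu> (\<mu> * p ^ n) q = (\<Sum>d\<in>nf_unit_residues K q1.
    nf_e K (\<mu> * p ^ (n - 1) * inv_mod q1 (class_rep d) / q1)
    * (nf_e K (\<nu> * class_rep d / q) * (\<Sum>r\<in>unit_lifts d. nf_e K (\<nu> * class_rep r / p))))"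
  unfolding kloosterman_eq_sum sum_unit_residues_eq_sum_lifts[OF assms(1,2)]
  by (intro sum.cong refl) (simp add: kloosterman_term_lift_split[OF assms(3-5)] sum_distrib_left)

lemma bezout_power_cong_one:
  assumes "p * u + q1 * v = 1" "u \<in> \<O>" "v \<in> \<O>"
  shows "nf_cong K q1 ((p * u) ^ k) 1"
proof -
  have "nf_cong K q1 (p * u) 1"
    unfolding nf_cong_def using assms integers_uminus
    by (intro bexI[of _ "- v"]) (simp_all add: algebra_simps flip: assms(1))
  then show ?thesis
    using nf_cong_power[OF integers_mult[OF p_integer assms(2)] integers_one] by fastforce
qed

lemma nf_e_scaled_term:
  assumes bezout: "p * u + q1 * v = 1" "u \<in> \<O>" "v \<in> \<O>"
    and nu: "\<nu> \<in> nf_codiff K" and mu: "\<mu> \<in> nf_codiff K" and "m \<ge> 1" "l \<ge> 1"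
    and y: "y \<in> \<O>" and yi: "y' \<in> \<O>"
  shows "nf_e K ((\<nu> * p ^ (m - 1) * (u ^ m * y) + \<mu> * p ^ (l - 1) * (p ^ m * y')) / q1)
    = nf_e K ((\<nu> * (u * y) + \<mu> * (p ^ (m + l - 1) * y')) / q1)"
proof -
  obtain k j where kj: "m = Suc k" "l = Suc j" using assms(6,7) by (metis Suc_le_D One_nat_def)
  have eq1: "p ^ (m - 1) * (u ^ m * y) = (p * u) ^ (m - 1) * (u * y)"
    and eq2: "p ^ (l - 1) * (p ^ m * y') = p ^ (m + l - 1) * y'"
    unfolding kj by (simp_all add: power_mult_distrib power_add ac_simps)
  have uy: "u * y \<in> \<O>" using bezout(2) y integers_mult by blast
  then have "nf_cong K q1 ((p * u) ^ (m - 1) * (u * y)) (1 * (u * y))"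
    using nf_cong_mult[OF integers_power[OF integers_mult[OF p_integer bezout(2)]] _
        bezout_power_cong_one[OF bezout] nf_cong_refl] by blast
  then have "nf_cong K q1 (p ^ (m - 1) * (u ^ m * y)) (u * y)" unfolding eq1 by simp
  moreover have "p ^ (l - 1) * (p ^ m * y') \<in> \<O>"
    using p_integer yi integers_mult integers_power by blast
  ultimately have
    "nf_e K ((\<nu> * (p ^ (m - 1) * (u ^ m * y)) + \<mu> * (p ^ (l - 1) * (p ^ m * y'))) / q1)
      = nf_e K ((\<nu> * (u * y) + \<mu> * (p ^ (m + l - 1) * y')) / q1)"
    using nf_e_cong2[OF nu mu q1_integer q1_nonzero uy] nf_cong_refl
    unfolding eq2 by blast
  then show ?thesis by (simp only: mult.assoc)
qed

lemma nf_e_excluded_lift_term: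
  assumes bezout: "p * u + q1 * v = 1" "v \<in> \<O>"
    and nu: "\<nu> \<in> nf_codiff K" and beta: "\<beta> \<in> nf_codiff K" and y: "y \<in> \<O>" and yi: "y' \<in> \<O>"
  shows "nf_e K ((\<nu> * (u * y) + \<beta> * y') / q1)
    = nf_e K (\<beta> * y' / q1) * (nf_e K (\<nu> * y / q) * nf_e K (\<nu> * (- v * y) / p))"
proof -
  have "\<nu> * (u * y) / q1 - (\<nu> * y / q + \<nu> * (- v * y) / p) = \<nu> * y * (p * u + q1 * v - 1) / q"
    unfolding q_eq using p_nonzero q1_nonzero by (simp add: field_simps)
  then have "(\<nu> * (u * y) + \<beta> * y') / q1 = \<beta> * y' / q1 + (\<nu> * y / q + \<nu> * (- v * y) / p)"
    using bezout(1) by (simp add: add_divide_distrib)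
  moreover have "\<beta> * y' / q1 \<in> K" "\<nu> * y / q \<in> K" "\<nu> * (- v * y) / p \<in> K"
    using codiff_mult_divide_in_K[OF beta yi q1_integer] codiff_mult_divide_in_K[OF nu y q_integer]
      codiff_mult_divide_in_K[OF nu integers_mult[OF integers_uminus[OF bezout(2)] y] p_integer]
    by simp_all
  ultimately show ?thesis by (simp only: nf_e_add K_add)
qed

text \<open>The terms of \<open>S(\<nu>, \<mu>p\<^sup>m\<^sup>+\<^sup>l; q)\<close> at the excluded lifts reassemble into a Kloosterman sum
  modulo \<open>q\<^sub>1\<close> after the substitution \<open>d \<mapsto> u\<^sup>md\<close>, as \<open>pu \<equiv> 1 (mod q\<^sub>1)\<close>.\<close>

lemma kloosterman_eq_sum_excluded_lifts:
  assumes bezout: "p * u + q1 * v = 1" "u \<in> \<O>" "v \<in> \<O>"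
    and nu: "\<nu> \<in> nf_codiff K" and mu: "\<mu> \<in> nf_codiff K" and m: "m \<ge> 1" and l: "l \<ge> 1"
  shows "kloosterman K (\<nu> * p ^ (m - 1)) (\<mu> * p ^ (l - 1)) q1 = (\<Sum>d\<in>nf_unit_residues K q1.
      nf_e K (\<mu> * p ^ (m + l - 1) * inv_mod q1 (class_rep d) / q1)
      * (nf_e K (\<nu> * class_rep d / q) * nf_e K (\<nu> * (- v * class_rep d) / p)))"
proof -
  have coeffs: "\<nu> * p ^ (m - 1) \<in> nf_codiff K" "\<mu> * p ^ (l - 1) \<in> nf_codiff K"
    and beta: "\<mu> * p ^ (m + l - 1) \<in> nf_codiff K"
    using nu mu p_integer integers_power codiff_mult by blast+
  have "nf_cong K q1 (u ^ m * p ^ m) 1"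
    using bezout_power_cong_one[OF bezout, of m] by (simp add: power_mult_distrib mult.commute)
  note scaled = kloosterman_eq_sum_scaled[OF q1_integer q1_nonzero coeffs
      integers_power[OF bezout(2)] integers_power[OF p_integer] this]
  show ?thesis
    unfolding scaled
  proof (rule sum.cong)
    fix d assume "d \<in> nf_unit_residues K q1"
    note y = class_rep_unit_residue[OF this]
    note yi = inv_mod(1)[OF y(2)]
    show "nf_e K ((\<nu> * p ^ (m - 1) * (u ^ m * class_rep d)
        + \<mu> * p ^ (l - 1) * (p ^ m * inv_mod q1 (class_rep d))) / q1)
      = nf_e K (\<mu> * p ^ (m + l - 1) * inv_mod q1 (class_rep d) / q1)
        * (nf_e K (\<nu> * class_rep d / q) * nf_e K (\<nu> * (- v * class_rep d) / p))"
      using nf_e_scaled_term[OF bezout nu mu m l y(1) yi]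
        nf_e_excluded_lift_term[OF bezout(1,3) nu beta y(1) yi]
      by (simp add: mult.assoc)
  qed simp
qed

lemma kloosterman_recursion_if_dvd:
  assumes "finite (nf_residues K p)" "finite (nf_unit_residues K q1)" "nf_cong K p q1 0"
    and \<chi>: "(\<Sum>r\<in>nf_residues K p. nf_e K (\<nu> * class_rep r / p)) = 0"
    and "\<nu> \<in> nf_codiff K" "\<mu> \<in> nf_codiff K" "m \<ge> 1" "l \<ge> 1"
  shows "kloosterman K (\<nu> * p ^ m) (\<mu> * p ^ l) q = kloosterman K \<nu> (\<mu> * p ^ (m + l)) q
    + of_nat (card (nf_residues K p)) * kloosterman K (\<nu> * p ^ (m - 1)) (\<mu> * p ^ (l - 1)) q1"
  using kloosterman_eq_sum_card_lifts[OF assms(1,2,5-8)]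
    kloosterman_eq_sum_lift_characters[OF assms(1,2,5,6) trans_le_add1[OF assms(7)]] \<chi>
    unit_lifts_if_dvd[OF assms(3)]
  by (simp add: kloosterman_eq_sum sum_distrib_left)

lemma kloosterman_recursion_if_coprime:
  assumes fin: "finite (nf_residues K p)" "finite (nf_unit_residues K q1)"
    and bezout: "p * u + q1 * v = 1" "u \<in> \<O>" "v \<in> \<O>"
    and \<chi>: "(\<Sum>r\<in>nf_residues K p. nf_e K (\<nu> * class_rep r / p)) = 0"
    and nu: "\<nu> \<in> nf_codiff K" and mu: "\<mu> \<in> nf_codiff K" and m: "m \<ge> 1" and l: "l \<ge> 1"
  shows "kloosterman K (\<nu> * p ^ m) (\<mu> * p ^ l) q = kloosterman K \<nu> (\<mu> * p ^ (m + l)) q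
    + of_nat (card (nf_residues K p)) * kloosterman K (\<nu> * p ^ (m - 1)) (\<mu> * p ^ (l - 1)) q1"
proof -
  have "card (nf_residues K p) \<ge> 1"
    using fin(1) residues_zero_one(1) by (metis One_nat_def Suc_leI card_gt_0_iff empty_iff)
  moreover have "card (unit_lifts d) = card (nf_residues K p) - 1"
    and "(\<Sum>r\<in>unit_lifts d. nf_e K (\<nu> * class_rep r / p)) = - nf_e K (\<nu> * (- v * class_rep d) / p)"
    if d: "d \<in> nf_unit_residues K q1" for d
  proof -
    have t: "- v * class_rep d \<in> \<O>"
      using bezout(3) class_rep_unit_residue(1)[OF d] integers_mult integers_uminus by simp
    note lifts = unit_lifts_if_coprime[OF bezout d]
    show "card (unit_lifts d) = card (nf_residues K p) - 1"
      unfolding lifts using fin(1) nf_res_in_residues[OF t] by simp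
    have "nf_e K (\<nu> * class_rep (nf_res K p (- v * class_rep d)) / p)
        = nf_e K (\<nu> * (- v * class_rep d) / p)"
      using nf_e_cong[OF nu p_integer p_nonzero t class_rep_nf_res(2)[OF t]] .
    then show "(\<Sum>r\<in>unit_lifts d. nf_e K (\<nu> * class_rep r / p))
        = - nf_e K (\<nu> * (- v * class_rep d) / p)"
      unfolding lifts using fin(1) nf_res_in_residues[OF t] \<chi> by (simp add: sum_diff1)
  qed
  ultimately have
    card: "of_nat (card (unit_lifts d)) = of_nat (card (nf_residues K p)) - (1 :: complex)" and
    sum: "(\<Sum>r\<in>unit_lifts d. nf_e K (\<nu> * class_rep r / p))
      = - nf_e K (\<nu> * (- v * class_rep d) / p)"
    if "d \<in> nf_unit_residues K q1" for d
    using that by (simp_all add: of_nat_diff)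
  let ?S = "kloosterman K (\<nu> * p ^ (m - 1)) (\<mu> * p ^ (l - 1)) q1"
  have "kloosterman K (\<nu> * p ^ m) (\<mu> * p ^ l) q = (of_nat (card (nf_residues K p)) - 1) * ?S"
    unfolding kloosterman_eq_sum_card_lifts[OF fin nu mu m l] kloosterman_eq_sum[of _ _ q1]
      sum_distrib_left by (rule sum.cong) (simp_all add: card)
  moreover have "kloosterman K \<nu> (\<mu> * p ^ (m + l)) q = - ?S"
    using m unfolding kloosterman_eq_sum_lift_characters[OF fin nu mu trans_le_add1[OF m]]
      kloosterman_eq_sum_excluded_lifts[OF bezout nu mu m l] sum_negf[symmetric]
    by (intro sum.cong) (simp_all add: sum)
  ultimately show ?thesis by (simp add: algebra_simps)
qed

lemma kloosterman_prime_recursion: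
  assumes "generates_different K \<delta>" "\<nu> \<in> nf_codiff K" "\<mu> \<in> nf_codiff K"
    and "\<not> nf_dvd K p (\<delta> * \<nu>)" "m \<ge> 1" "l \<ge> 1"
  shows "kloosterman K (\<nu> * p ^ m) (\<mu> * p ^ l) q = kloosterman K \<nu> (\<mu> * p ^ (m + l)) q
    + of_nat (card (nf_residues K p)) * kloosterman K (\<nu> * p ^ (m - 1)) (\<mu> * p ^ (l - 1)) q1"
proof (cases "finite (nf_residues K p) \<and> finite (nf_unit_residues K q1)")
  case False
  then have "infinite (nf_unit_residues K q)" using finite_unit_residues_iff by blast
  then show ?thesis using False unfolding kloosterman_eq_sum by auto
next
  case True
  then have fin: "finite (nf_residues K p)" "finite (nf_unit_residues K q1)" by simp_all
  note \<chi> = sum_residues_nf_e_eq_0[OF assms(1,2) p_integer p_nonzero assms(4)]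
  show ?thesis
  proof (cases "nf_cong K p q1 0")
    case True
    then show ?thesis using kloosterman_recursion_if_dvd[OF fin _ \<chi> assms(2,3,5,6)] by blast
  next
    case False
    then obtain u v where "u \<in> \<O>" "v \<in> \<O>" "p * u + q1 * v = 1"
      by (rule bezout_if_not_dvd)
    then show ?thesis using kloosterman_recursion_if_coprime[OF fin _ _ _ \<chi> assms(2,3,5,6)] by blast
  qed
qed

end

theorem corollary4p3:
  fixes K :: "complex set" and \<delta> q p \<nu> \<mu> :: complex and m l :: nat
  assumes "number_field K" and "totally_real K"
    and "narrow_class_number_one K"
    and "generates_different K \<delta>"
    and "q \<in> nf_O K" and "q \<noteq> 0"
    and "m \<ge> 1" and "l \<ge> 1"
    and "\<nu> \<in> nf_codiff K" and "\<mu> \<in> nf_codiff K"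
    and "nf_prime_elem K p" and "nf_dvd K p q"
    and "\<not> nf_dvd K p (\<delta> * \<nu>)" and "\<not> nf_dvd K p (\<delta> * \<mu>)"
  shows "kloosterman K (\<nu> * p ^ m) (\<mu> * p ^ l) q =
           kloosterman K \<nu> (\<mu> * p ^ (m + l)) q
           + of_nat (ideal_norm K p) * kloosterman K (\<nu> * p ^ (m - 1)) (\<mu> * p ^ (l - 1)) (q / p)"
proof -
  have "nf_subfield K" using assms(1) unfolding number_field_def by simp
  moreover have "p \<noteq> 0" "nf_ideal K (principal_ideal K p)"
    using assms(11) unfolding nf_prime_elem_def nf_prime_ideal_def by simp_all
  ultimately have "ring_of_integers K" by (rule ring_of_integersI)
  obtain c where c: "c \<in> nf_O K" "q = p * c" using assms(12) unfolding nf_dvd_def by blast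
  with assms(6) have "c \<noteq> 0" by auto
  interpret prime_fibration K p q c
    using \<open>ring_of_integers K\<close> assms(11) c \<open>c \<noteq> 0\<close>
    unfolding prime_fibration_def prime_fibration_axioms_def by blast
  have "q / p = c" using c(2) p_nonzero by simp
  then show ?thesis
    unfolding ideal_norm_def using kloosterman_prime_recursion[OF assms(4,9,10,13,7,8)] by simp
qed

end
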